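(* Suppose that on every level $\ell=1,\dots,L-1$ the flux coarse degrees of freedom are the averages over every face. Fix a level $\ell$ and $r^\ell\in (U^\ell)'$, and let $(u^\ell,p^\ell)\in(U^\ell,Q^\ell)$ be the output of the Multilevel BDDC preconditioner applied to $(r^\ell,0)$. Then $u^\ell$ is divergence-free in the sense that $b(u^\ell,q)=0$ for all $q\in Q^\ell$.
   Context: Setting. $\Omega\subset\mathbb R^2$ is a bounded polygonal domain, $k$ is a coefficient that is constant, $k_i>0$, on each top-level subdomain (more generally a symmetric uniformly positive definite matrix), and for flux fields $u,v$ and scalar $q$ we set $a(u,v)=\int k^{-1}u\cdot v\,dx$, $b(u,q)=-\int(\nabla\cdot u)\,q\,dx$, where for functions that may be discontinuous across subdomain boundaries the integrals are taken piecewise over the subdomains (and the $a$-norm $\|v\|_a=\sqrt{a(v,v)}$ likewise). Level 0: a triangulation of $\Omega$ into (quadrilateral) elements of size $h=H^0$; $U$ is the lowest-order Raviart–Thomas (RT0) space with zero normal component on $\partial\Omega$ and $Q$ the piecewise constants with zero mean on $\Omega$. For levels $\ell=1,\dots,L-1$ there are nested nonoverlapping decompositions of $\Omega$ into level-$\ell$ substructures $\Omega^\ell_i$, $i=1,\dots,N^\ell$, each a union of level-$(\ell-1)$ substructures (level-0 substructures are the elements), forming a conforming quasi-uniform triangulation with characteristic size $H^\ell$. A level-$\ell$ face is the intersection of the boundaries of two adjacent level-$\ell$ substructures; $\Gamma^\ell$ is the set of level-$\ell$ degrees of freedom shared by two level-$\ell$ substructures. Level-1 degrees of freedom are the RT0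 flux degrees of freedom; level-$\ell$ degrees of freedom ($\ell\ge2$) are the level-$(\ell-1)$ flux coarse degrees of freedom. Pressure spaces: $Q^1=Q$, $Q^\ell=Q^\ell_0\oplus Q^\ell_I$, where $Q^\ell_0$ consists of functions constant on each $\Omega^\ell_i$ with zero mean on $\Omega$, $Q^\ell_I=Q^\ell_1\times\dots\times Q^\ell_{N^\ell}$ with $Q^\ell_i$ the functions of $Q^\ell$ supported in $\Omega^\ell_i$ with zero mean on $\Omega^\ell_i$; $Q^{\ell+1}=Q^\ell_0$. Flux spaces: $U^1=U$; $W^\ell=W^\ell_1\times\dots\times W^\ell_{N^\ell}$, where $W^\ell_i$ is the space of flux functions on $\Omega^\ell_i$ (spanned by level-$\ell$ shape functions) with all degrees of freedom on $\partial\Omega^\ell_i\cap\partial\Omega$ zero; $U^\ell\subset W^\ell$ is the subspace of functions continuous across $\Gamma^\ell$; $U^\ell_I\subset U^\ell$ the functions whose degrees of freedom on $\Gamma^\ell$ vanish. $P^\ell$ maps $w\in W^\ell$ to $(u_I,p_I)\in(U^\ell_I,Q^\ell_I)$ solving $a(u_I,v_I)+b(v_I,p_I)=a(w,v_I)$ for all $v_I\in U^\ell_I$ and $b(u_I,q_I)=b(w,q_I)$ for all $q_I\in Q^\ell_I$; we write $(I-P^\ell)w:=w-u_I$, and $w$ is called Stokes harmonic (on level $\ell$) if $u_I=0$. The flux coarse degrees of freedom on level $\ell$ are averages of level-$\ell$ flux degrees of freedom over faces. $\widetilde W^\ell\subset W^\ell$: functions whose flux coarse degrees of freedom have a common value on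 each face shared by two adjacent level-$\ell$ substructures and vanish on $\partial\Omega$; $\widetilde W^\ell_\Delta\subset W^\ell$: functions all of whose flux coarse degrees of freedom vanish; $\widetilde W^\ell_\Pi\subset\widetilde W^\ell$: Stokes harmonic functions in $\widetilde W^\ell$ (uniquely determined by their coarse degrees of freedom), so $\widetilde W^\ell=\widetilde W^\ell_\Delta\oplus\widetilde W^\ell_\Pi$; $U^{\ell+1}=\widetilde W^\ell_\Pi$. $E^\ell:\widetilde W^\ell\to U^\ell$ is the projection averaging the values of each interface degree of freedom $x\in\partial\Omega^\ell_i\cap\partial\Omega^\ell_j$ with weights $e_i(x)=k_i^{-\gamma}/(k_i^{-\gamma}+k_j^{-\gamma})$ for a fixed $\gamma\ge0$ (weight 1 for interior degrees of freedom). Multilevel BDDC preconditioner $(r^\ell,0)\mapsto(u^\ell,p^\ell)$. Downward sweep, for $k=\ell,\dots,L-1$: (i) find $(u^k_I,p^k_I)\in(U^k_I,Q^k_I)$ with $a(u^k_I,v_I)+b(v_I,p^k_I)=\langle r^k,v_I\rangle$ for all $v_I\in U^k_I$ and $b(u^k_I,q_I)=0$ for all $q_I\in Q^k_I$; (ii) set $\langle r^k_B,v\rangle=\langle r^k,v\rangle-a(u^k_I,v)-b(v,p^k_I)$ for $v\in U^k$; (iii) find $(w^k_\Delta,p^k_{I\Delta})\in(\widetilde W^k_\Delta,Q^k_I)$ with $a(w^k_\Delta,z)+b(z,p^k_{I\Delta})=\langle r^k_B,E^kz\rangle$ for all $z\in\widetilde W^k_\Delta$ and $b(w^k_\Delta,q_I)=0$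 for all $q_I\in Q^k_I$; (iv) the coarse problem is: find $(w^k_\Pi,p^k_0)\in(\widetilde W^k_\Pi,Q^k_0)$ with $a(w^k_\Pi,z)+b(z,p^k_0)=\langle r^k_B,E^kz\rangle$ for all $z\in\widetilde W^k_\Pi$ and $b(w^k_\Pi,q_0)=0$ for all $q_0\in Q^k_0$; if $k=L-1$ solve it exactly and set $u^L=w^{L-1}_\Pi$, $p^L=p^{L-1}_0$; otherwise define $r^{k+1}\in(U^{k+1})'$ by $\langle r^{k+1},v\rangle=\langle r^k_B,E^kv\rangle$ and continue. Upward sweep, for $k=L-1,\dots,\ell$: set $u^k_B=E^k(w^k_\Delta+u^{k+1})$ and $p^k_0=p^{k+1}$; find $(v^k_I,q^k_I)\in(U^k_I,Q^k_I)$ with $a(v^k_I,z_I)+b(z_I,q^k_I)=a(u^k_B,z_I)$ for all $z_I\in U^k_I$ and $b(v^k_I,\bar q_I)=b(u^k_B,\bar q_I)$ for all $\bar q_I\in Q^k_I$; set $u^k=u^k_I+u^k_B-v^k_I$, $p^k=p^k_I+p^k_0-q^k_I$. *)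

theory Defs
  imports Complex_Main
begin

(* 'e : the elements (quadrilaterals) of the level-0 triangulation
   'f : the edges of the triangulation
   A (possibly broken) lowest-order Raviart--Thomas flux function is stored
   by its element-wise degrees of freedom:  v T e  is the normal flux
   (integral of v.n_e over e, n_e a FIXED normal of the edge e) of the
   restriction of v to the element T.  Every flux space of every level is a
   subspace of these fully broken functions.
   ------------------------------------------------------------------------ *)

type_synonym ('e,'f) flux = "'e \<Rightarrow> 'f \<Rightarrow> real"

record ('e,'f) bddc_setting =
  m_inc   :: "'e \<Rightarrow> 'f \<Rightarrow> real"        (* +1/-1: e is an edge of T, n_e points out of/into T; 0: e not an edge of T *)
  m_len   :: "'f \<Rightarrow> real"
  m_area  :: "'e \<Rightarrow> real"
  m_A     :: "'e \<Rightarrow> 'f \<Rightarrow> 'f \<Rightarrow> real"  (* local matrix of a on element T: int_T k^-1 phi_e . phi_e' *)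
  m_k     :: "'e \<Rightarrow> real"
  m_gamma :: real
  m_dec   :: "nat \<Rightarrow> 'e set set"         (* level-l substructures, as sets of elements *)
  m_L     :: nat

definition af :: "('e::finite,'f::finite) bddc_setting \<Rightarrow> ('e,'f) flux \<Rightarrow> ('e,'f) flux \<Rightarrow> real" where
  "af M v w = (\<Sum>T\<in>UNIV. \<Sum>e\<in>UNIV. \<Sum>e'\<in>UNIV. m_A M T e e' * v T e * w T e')"

(* b(v,q) = - int div v q ;  int_T div v = outward flux through the edges of T *)
definition bf :: "('e::finite,'f::finite) bddc_setting \<Rightarrow> ('e,'f) flux \<Rightarrow> ('e \<Rightarrow> real) \<Rightarrow> real" where
  "bf M v q = - (\<Sum>T\<in>UNIV. q T * (\<Sum>e\<in>UNIV. m_inc M T e * v T e))"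

definition edges_between :: "('e::finite,'f::finite) bddc_setting \<Rightarrow> 'e set \<Rightarrow> 'e set \<Rightarrow> 'f set" where
  "edges_between M S S' = {e. \<exists>T\<in>S. \<exists>T'\<in>S'. m_inc M T e \<noteq> 0 \<and> m_inc M T' e \<noteq> 0}"

(* level-m faces: ordered pairs of adjacent distinct level-m substructures
   (level-0 substructures are the elements, level-0 faces are the interior edges) *)
definition faces :: "('e::finite,'f::finite) bddc_setting \<Rightarrow> nat \<Rightarrow> ('e set \<times> 'e set) set" where
  "faces M m = {(S,S'). S \<in> m_dec M m \<and> S' \<in> m_dec M m \<and> S \<noteq> S' \<and> edges_between M S S' \<noteq> {}}"

definition flen :: "('e::finite,'f::finite) bddc_setting \<Rightarrow> 'e set \<Rightarrow> 'e set \<Rightarrow> real" where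
  "flen M S S' = (\<Sum>e\<in>edges_between M S S'. m_len M e)"

(* average over the face (S,S') of the normal flux (normal pointing from S to S')
   of v, as seen from the side S.  For a level-(l-1) face this is the value of
   the corresponding level-l degree of freedom (level-1 dofs: edges = level-0 faces). *)
definition dval :: "('e::finite,'f::finite) bddc_setting \<Rightarrow> ('e,'f) flux \<Rightarrow> 'e set \<Rightarrow> 'e set \<Rightarrow> real" where
  "dval M v S S' = (\<Sum>e\<in>edges_between M S S'. \<Sum>T\<in>S. m_inc M T e * v T e) / flen M S S'"

(* Gamma^l: level-l dofs (level-(l-1) faces) shared by two different level-l substructures *)
definition Gamma :: "('e::finite,'f::finite) bddc_setting \<Rightarrow> nat \<Rightarrow> ('e set \<times> 'e set) set" where
  "Gamma M l = {(S,S') \<in> faces M (l - 1). \<not> (\<exists>R\<in>m_dec M l. S \<subseteq> R \<and> S' \<subseteq> R)}"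

(* flux coarse dof of level l on the level-l face (R,R'), seen from R:
   the average over the face of the level-l flux dofs lying on it
   (weighted by their measure, i.e. the mean normal flux over the face) *)
definition cavg :: "('e::finite,'f::finite) bddc_setting \<Rightarrow> nat \<Rightarrow> ('e,'f) flux \<Rightarrow> 'e set \<Rightarrow> 'e set \<Rightarrow> real" where
  "cavg M l v R R' =
     (\<Sum>(S,S')\<in>{(S,S') \<in> faces M (l - 1). S \<subseteq> R \<and> S' \<subseteq> R'}. flen M S S' * dval M v S S') /
     (\<Sum>(S,S')\<in>{(S,S') \<in> faces M (l - 1). S \<subseteq> R \<and> S' \<subseteq> R'}. flen M S S')"

definition Qzero :: "('e::finite,'f::finite) bddc_setting \<Rightarrow> ('e \<Rightarrow> real) set" where
  "Qzero M = {q. (\<Sum>T\<in>UNIV. m_area M T * q T) = 0}"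

definition Q0 :: "('e::finite,'f::finite) bddc_setting \<Rightarrow> nat \<Rightarrow> ('e \<Rightarrow> real) set" where
  "Q0 M l = {q \<in> Qzero M. \<forall>R\<in>m_dec M l. \<forall>T\<in>R. \<forall>T'\<in>R. q T = q T'}"

definition Qsp :: "('e::finite,'f::finite) bddc_setting \<Rightarrow> nat \<Rightarrow> ('e \<Rightarrow> real) set" where
  "Qsp M l = (if l \<le> 1 then Qzero M else Q0 M (l - 1))"

(* Q^l_I = Q^l_1 x ... x Q^l_N, identified with the sums of its components:
   the functions of Q^l with zero mean on every level-l substructure *)
definition QI :: "('e::finite,'f::finite) bddc_setting \<Rightarrow> nat \<Rightarrow> ('e \<Rightarrow> real) set" where
  "QI M l = {q \<in> Qsp M l. \<forall>R\<in>m_dec M l. (\<Sum>T\<in>R. m_area M T * q T) = 0}"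

(* U = U^1: global RT0 space with zero normal flux on the boundary *)
definition RT0 :: "('e::finite,'f::finite) bddc_setting \<Rightarrow> ('e,'f) flux set" where
  "RT0 M = {v. (\<forall>T e. m_inc M T e = 0 \<longrightarrow> v T e = 0)
             \<and> (\<forall>T T' e. m_inc M T e \<noteq> 0 \<and> m_inc M T' e \<noteq> 0 \<longrightarrow> v T e = v T' e)
             \<and> (\<forall>T e. m_inc M T e \<noteq> 0 \<and> (\<forall>T'. m_inc M T' e \<noteq> 0 \<longrightarrow> T' = T) \<longrightarrow> v T e = 0)}"

(* W^l, given the global level-l space Uf whose elements are spanned by the
   level-l shape functions: product over the level-l substructures of the
   restrictions of such functions *)
definition Wof :: "('e::finite,'f::finite) bddc_setting \<Rightarrow> nat \<Rightarrow> ('e,'f) flux set \<Rightarrow> ('e,'f) flux set" where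
  "Wof M l Uf = {w. \<forall>R\<in>m_dec M l. \<exists>u\<in>Uf. \<forall>T\<in>R. w T = u T}"

(* W~^l : coarse dofs have a common value on each face (normal from R to R') *)
definition Wt_of :: "('e::finite,'f::finite) bddc_setting \<Rightarrow> nat \<Rightarrow> ('e,'f) flux set \<Rightarrow> ('e,'f) flux set" where
  "Wt_of M l Ws = {w \<in> Ws. \<forall>(R,R')\<in>faces M l. cavg M l w R R' = - cavg M l w R' R}"

definition WtD_of :: "('e::finite,'f::finite) bddc_setting \<Rightarrow> nat \<Rightarrow> ('e,'f) flux set \<Rightarrow> ('e,'f) flux set" where
  "WtD_of M l Ws = {w \<in> Ws. \<forall>(R,R')\<in>faces M l. cavg M l w R R' = 0}"

definition WtPi_of :: "('e::finite,'f::finite) bddc_setting \<Rightarrow> nat \<Rightarrow> ('e,'f) flux set \<Rightarrow> ('e,'f) flux set" where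
  "WtPi_of M l Ws = {w \<in> Wt_of M l Ws. (\<forall>q\<in>QI M l. bf M w q = 0)
                     \<and> (\<exists>p\<in>QI M l. \<forall>z\<in>WtD_of M l Ws. af M w z = bf M z p)}"

(* the global level-l space spanned by level-l shape functions:
   level 1: U;  level l+1: W~^l_Pi *)
primrec Ufull :: "('e::finite,'f::finite) bddc_setting \<Rightarrow> nat \<Rightarrow> ('e,'f) flux set" where
  "Ufull M 0 = {}"
| "Ufull M (Suc m) = (if m = 0 then RT0 M else WtPi_of M m (Wof M m (Ufull M m)))"

definition FluxW :: "('e::finite,'f::finite) bddc_setting \<Rightarrow> nat \<Rightarrow> ('e,'f) flux set" where
  "FluxW M l = Wof M l (Ufull M l)"

definition FluxU :: "('e::finite,'f::finite) bddc_setting \<Rightarrow> nat \<Rightarrow> ('e,'f) flux set" where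
  "FluxU M l = {w \<in> FluxW M l. \<forall>(S,S')\<in>Gamma M l. dval M w S S' = - dval M w S' S}"

definition FluxUI :: "('e::finite,'f::finite) bddc_setting \<Rightarrow> nat \<Rightarrow> ('e,'f) flux set" where
  "FluxUI M l = {w \<in> FluxU M l. \<forall>(S,S')\<in>Gamma M l. dval M w S S' = 0}"

definition Wtil :: "('e::finite,'f::finite) bddc_setting \<Rightarrow> nat \<Rightarrow> ('e,'f) flux set" where
  "Wtil M l = Wt_of M l (FluxW M l)"

definition WtilD :: "('e::finite,'f::finite) bddc_setting \<Rightarrow> nat \<Rightarrow> ('e,'f) flux set" where
  "WtilD M l = WtD_of M l (FluxW M l)"

definition WtilPi :: "('e::finite,'f::finite) bddc_setting \<Rightarrow> nat \<Rightarrow> ('e,'f) flux set" where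
  "WtilPi M l = WtPi_of M l (FluxW M l)"

(* value of k on an element set (k is constant on the substructures, see valid_setting) *)
definition kval :: "('e::finite,'f::finite) bddc_setting \<Rightarrow> 'e set \<Rightarrow> real" where
  "kval M S = m_k M (SOME T. T \<in> S)"

definition ewt :: "('e::finite,'f::finite) bddc_setting \<Rightarrow> 'e set \<Rightarrow> 'e set \<Rightarrow> real" where
  "ewt M S S' = kval M S powr (- m_gamma M) / (kval M S powr (- m_gamma M) + kval M S' powr (- m_gamma M))"

(* Erel M l w u  <->  u = E^l w : u is the function of U^l whose level-l dofs
   are the (weighted) averages of those of w (interior dofs unchanged).
   The value of the dof (S,S') with normal from S to S' seen from the
   side of S' is  - dval w S' S. *)
definition Erel :: "('e::finite,'f::finite) bddc_setting \<Rightarrow> nat \<Rightarrow> ('e,'f) flux \<Rightarrow> ('e,'f) flux \<Rightarrow> bool" where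
  "Erel M l w u \<longleftrightarrow> u \<in> FluxU M l \<and>
     (\<forall>(S,S')\<in>faces M (l - 1).
        dval M u S S' = (if (S,S') \<in> Gamma M l
                         then ewt M S S' * dval M w S S' - ewt M S' S * dval M w S' S
                         else dval M w S S'))"

(* one level k of the preconditioner applied to (r,0), producing (u,p);
   C rB un pn describes how (u^{k+1},p^{k+1}) is obtained from the
   functional r^k_B (coarse solve, or recursion to the next level) *)
definition level_step ::
  "('e::finite,'f::finite) bddc_setting \<Rightarrow> nat \<Rightarrow> (('e,'f) flux \<Rightarrow> real)
   \<Rightarrow> ((('e,'f) flux \<Rightarrow> real) \<Rightarrow> ('e,'f) flux \<Rightarrow> ('e \<Rightarrow> real) \<Rightarrow> bool)
   \<Rightarrow> ('e,'f) flux \<Rightarrow> ('e \<Rightarrow> real) \<Rightarrow> bool" where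
  "level_step M k r C u p \<longleftrightarrow>
    (\<exists>uI pI wD pID un pn uB vI qI.
       \<comment> \<open>(i)\<close>
       uI \<in> FluxUI M k \<and> pI \<in> QI M k
       \<and> (\<forall>v\<in>FluxUI M k. af M uI v + bf M v pI = r v)
       \<and> (\<forall>q\<in>QI M k. bf M uI q = 0)
       \<comment> \<open>(ii),(iii): r_B v = r v - a(uI,v) - b(v,pI)\<close>
       \<and> wD \<in> WtilD M k \<and> pID \<in> QI M k
       \<and> (\<forall>z\<in>WtilD M k. \<forall>y. Erel M k z y \<longrightarrow>
             af M wD z + bf M z pID = r y - af M uI y - bf M y pI)
       \<and> (\<forall>q\<in>QI M k. bf M wD q = 0)
       \<comment> \<open>(iv): coarse problem / next level\<close>
       \<and> C (\<lambda>y. r y - af M uI y - bf M y pI) un pn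
       \<comment> \<open>upward sweep\<close>
       \<and> Erel M k (\<lambda>T e. wD T e + un T e) uB
       \<and> vI \<in> FluxUI M k \<and> qI \<in> QI M k
       \<and> (\<forall>z\<in>FluxUI M k. af M vI z + bf M z qI = af M uB z)
       \<and> (\<forall>q\<in>QI M k. bf M vI q = bf M uB q)
       \<and> u = (\<lambda>T e. uI T e + uB T e - vI T e) \<and> p = (\<lambda>T. pI T + pn T - qI T))"

definition coarse_solve ::
  "('e::finite,'f::finite) bddc_setting \<Rightarrow> nat \<Rightarrow> (('e,'f) flux \<Rightarrow> real)
   \<Rightarrow> ('e,'f) flux \<Rightarrow> ('e \<Rightarrow> real) \<Rightarrow> bool" where
  "coarse_solve M k rB w p0 \<longleftrightarrow>
     w \<in> WtilPi M k \<and> p0 \<in> Q0 M k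
     \<and> (\<forall>z\<in>WtilPi M k. \<forall>y. Erel M k z y \<longrightarrow> af M w z + bf M z p0 = rB y)
     \<and> (\<forall>q\<in>Q0 M k. bf M w q = 0)"

(* bddc M n k r u p : (u,p) is the output of the multilevel BDDC preconditioner
   started on level k with (r,0), where n = L-1-k levels remain above k *)
primrec bddc ::
  "('e::finite,'f::finite) bddc_setting \<Rightarrow> nat \<Rightarrow> nat \<Rightarrow> (('e,'f) flux \<Rightarrow> real)
   \<Rightarrow> ('e,'f) flux \<Rightarrow> ('e \<Rightarrow> real) \<Rightarrow> bool" where
  "bddc M 0 k r u p = level_step M k r (coarse_solve M k) u p"
| "bddc M (Suc n) k r u p =
     level_step M k r
       (\<lambda>rB un pn. \<exists>rn. (\<forall>v\<in>FluxU M (Suc k). \<forall>y. Erel M k v y \<longrightarrow> rn v = rB y)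
                        \<and> bddc M n (Suc k) rn un pn) u p"

definition lin_functional_on :: "('e,'f) flux set \<Rightarrow> (('e,'f) flux \<Rightarrow> real) \<Rightarrow> bool" where
  "lin_functional_on Us r \<longleftrightarrow>
     (\<forall>x\<in>Us. \<forall>y\<in>Us. r (\<lambda>T e. x T e + y T e) = r x + r y) \<and> (\<forall>c. \<forall>x\<in>Us. r (\<lambda>T e. c * x T e) = c * r x)"

definition valid_setting :: "('e::finite,'f::finite) bddc_setting \<Rightarrow> bool" where
  "valid_setting M \<longleftrightarrow>
     \<comment> \<open>quadrilateral elements, edges with fixed normals\<close>
     (\<forall>T e. m_inc M T e \<in> {-1, 0, 1})
     \<and> (\<forall>T. card {e. m_inc M T e \<noteq> 0} = 4)
     \<and> (\<forall>e. 1 \<le> card {T. m_inc M T e \<noteq> 0} \<and> card {T. m_inc M T e \<noteq> 0} \<le> 2)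
     \<and> (\<forall>T T' e. T \<noteq> T' \<and> m_inc M T e \<noteq> 0 \<and> m_inc M T' e \<noteq> 0 \<longrightarrow> m_inc M T' e = - m_inc M T e)
     \<and> (\<forall>e. m_len M e > 0) \<and> (\<forall>T. m_area M T > 0)
     \<comment> \<open>a: elementwise symmetric positive definite local matrices\<close>
     \<and> (\<forall>T e e'. m_A M T e e' = m_A M T e' e)
     \<and> (\<forall>T e e'. m_inc M T e = 0 \<or> m_inc M T e' = 0 \<longrightarrow> m_A M T e e' = 0)
     \<and> (\<forall>T x. (\<exists>e. m_inc M T e \<noteq> 0 \<and> x e \<noteq> 0) \<longrightarrow>
              (\<Sum>e\<in>UNIV. \<Sum>e'\<in>UNIV. m_A M T e e' * x e * x e') > 0)
     \<comment> \<open>coefficient and weights\<close>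
     \<and> (\<forall>T. m_k M T > 0) \<and> m_gamma M \<ge> 0
     \<comment> \<open>levels and nested decompositions\<close>
     \<and> m_L M \<ge> 2
     \<and> m_dec M 0 = {{T} | T. True}
     \<and> (\<forall>l. 1 \<le> l \<and> l \<le> m_L M - 1 \<longrightarrow>
            (\<forall>R\<in>m_dec M l. R \<noteq> {})
          \<and> (\<forall>R\<in>m_dec M l. \<forall>R'\<in>m_dec M l. R \<noteq> R' \<longrightarrow> R \<inter> R' = {})
          \<and> \<Union>(m_dec M l) = UNIV
          \<and> (\<forall>S\<in>m_dec M (l - 1). \<exists>R\<in>m_dec M l. S \<subseteq> R))
     \<comment> \<open>k constant on each top-level subdomain\<close>
     \<and> (\<forall>R\<in>m_dec M (m_L M - 1). \<forall>T\<in>R. \<forall>T'\<in>R. m_k M T = m_k M T')"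

end

theory Submission
  imports Defs
begin

(* Write outflux v X for the total flux of v out of a set X of elements (the integral
   of div v over X). Against a pressure that is constant on the level-k substructures,
   b(v,q) only sees these outfluxes (bf_piecewise_const). The outflux of a substructure
   splits into the flux through its interior edges and the fluxes through its faces
   (outflux_split), and both parts are compatible with the nested decompositions
   (face_flux_refine, inner_flux_refine). From this we derive:
   - every function of W^k has zero interior flux on level k (inner_flux_W_zero), by
     induction over the levels, since the coarse degrees of freedom of W~^(k-1) are
     continuous across the faces between level-(k-1) substructures;
   - functions of U^k_I have no outflux (FluxUI_outflux_zero), and the averaging E^k
     preserves the outfluxes of wD + un when wD has vanishing coarse degrees of freedom
     and un is balanced on level k (Erel_outflux);
   - outputs of level k+1, being combinations of U^(k+1) functions, are balanced on
     level k (U_combination_balanced).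
   Hence one level of the preconditioner turns a next-level output orthogonal to Q^k_0
   into a divergence-free output (level_step_divfree), and induction over the levels
   (bddc_divfree) gives the theorem. *)

lemma valid_setting_parts:
  assumes "valid_setting M"
  shows "\<forall>e. 1 \<le> card {T. m_inc M T e \<noteq> 0} \<and> card {T. m_inc M T e \<noteq> 0} \<le> 2"
    and "\<forall>T T' e. T \<noteq> T' \<and> m_inc M T e \<noteq> 0 \<and> m_inc M T' e \<noteq> 0 \<longrightarrow> m_inc M T' e = - m_inc M T e"
    and "\<forall>e. m_len M e > 0"
    and "\<forall>T. m_area M T > 0"
    and "\<forall>T. m_k M T > 0"
    and "m_dec M 0 = {{T} | T. True}"
    and "\<forall>l. 1 \<le> l \<and> l \<le> m_L M - 1 \<longrightarrow>
            (\<forall>R\<in>m_dec M l. R \<noteq> {})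
          \<and> (\<forall>R\<in>m_dec M l. \<forall>R'\<in>m_dec M l. R \<noteq> R' \<longrightarrow> R \<inter> R' = {})
          \<and> \<Union>(m_dec M l) = UNIV
          \<and> (\<forall>S\<in>m_dec M (l - 1). \<exists>R\<in>m_dec M l. S \<subseteq> R)"
    and "\<forall>R\<in>m_dec M (m_L M - 1). \<forall>T\<in>R. \<forall>T'\<in>R. m_k M T = m_k M T'"
  by (insert assms[unfolded valid_setting_def]) (elim conjE, assumption)+

lemma valid_len_pos: "valid_setting M \<Longrightarrow> m_len M e > 0"
  and valid_area_pos: "valid_setting M \<Longrightarrow> m_area M T > 0"
  and valid_k_pos: "valid_setting M \<Longrightarrow> m_k M T > 0"
  using valid_setting_parts(3-5) by blast+

section \<open>Partitions and the nested decompositions\<close>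

definition is_partition :: "'a set set \<Rightarrow> bool" where
  "is_partition P \<longleftrightarrow>
     (\<forall>R\<in>P. R \<noteq> {}) \<and> (\<forall>R\<in>P. \<forall>R'\<in>P. R \<noteq> R' \<longrightarrow> R \<inter> R' = {}) \<and> \<Union>P = UNIV"

abbreviation blocks_in :: "'a set set \<Rightarrow> 'a set \<Rightarrow> 'a set set" where
  "blocks_in P Y \<equiv> {S \<in> P. S \<subseteq> Y}"

lemma partition_cover: "is_partition P \<Longrightarrow> \<exists>X\<in>P. T \<in> X"
  unfolding is_partition_def by blast

lemma partition_unique: "is_partition P \<Longrightarrow> X \<in> P \<Longrightarrow> X' \<in> P \<Longrightarrow> T \<in> X \<Longrightarrow> T \<in> X' \<Longrightarrow> X = X'"
  unfolding is_partition_def by blast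

lemma partition_nonempty: "is_partition P \<Longrightarrow> X \<in> P \<Longrightarrow> X \<noteq> {}"
  unfolding is_partition_def by blast

lemma partition_disjoint: "is_partition P \<Longrightarrow> X \<in> P \<Longrightarrow> X' \<in> P \<Longrightarrow> X \<noteq> X' \<Longrightarrow> X \<inter> X' = {}"
  unfolding is_partition_def by blast

lemma dec_partition:
  assumes v: "valid_setting M" and m: "m \<le> m_L M - 1"
  shows "is_partition (m_dec M m)"
proof (cases "m = 0")
  case True
  then show ?thesis using valid_setting_parts(6)[OF v] unfolding is_partition_def by auto
next
  case False
  then have "1 \<le> m" by simp
  then show ?thesis using valid_setting_parts(7)[OF v, rule_format, of m] m
    unfolding is_partition_def by blast
qed

lemma dec_nested:
  assumes "valid_setting M" "1 \<le> l" "l \<le> m_L M - 1" "S \<in> m_dec M (l - 1)"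
  shows "\<exists>R\<in>m_dec M l. S \<subseteq> R"
  using valid_setting_parts(7)[OF assms(1)] assms(2-4) by blast

lemma dec_refines:
  assumes v: "valid_setting M" and l: "1 \<le> l" "l \<le> m_L M - 1"
    and S: "S \<in> m_dec M (l - 1)" and X: "X \<in> m_dec M l" and T: "T \<in> S" "T \<in> X"
  shows "S \<subseteq> X"
proof -
  obtain R where R: "R \<in> m_dec M l" "S \<subseteq> R" using dec_nested[OF v l S] by blast
  then have "R = X" using partition_unique[OF dec_partition[OF v l(2)] R(1) X] T by blast
  with R show ?thesis by simp
qed

lemma dec_ancestor:
  assumes v: "valid_setting M" and "n \<le> m_L M - 1" "m \<le> n" and S: "S \<in> m_dec M m"
  shows "\<exists>Z\<in>m_dec M n. S \<subseteq> Z"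
  using assms(2,3)
proof (induction n)
  case 0
  then show ?case using S by auto
next
  case (Suc n)
  show ?case
  proof (cases "m = Suc n")
    case True
    then show ?thesis using S by blast
  next
    case False
    then obtain Z where Z: "Z \<in> m_dec M n" "S \<subseteq> Z" using Suc by auto
    obtain R where "R \<in> m_dec M (Suc n)" "Z \<subseteq> R" using dec_nested[OF v _ Suc.prems(1), of Z] Z(1) by auto
    with Z show ?thesis by blast
  qed
qed

lemma dec_children_cover:
  assumes v: "valid_setting M" and l: "1 \<le> l" "l \<le> m_L M - 1" and X: "X \<in> m_dec M l"
  shows "\<forall>T\<in>X. \<exists>S\<in>m_dec M (l - 1). T \<in> S \<and> S \<subseteq> X"
proof
  fix T assume T: "T \<in> X"
  have "l - 1 \<le> m_L M - 1" using l by simp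
  then obtain S where S: "S \<in> m_dec M (l - 1)" "T \<in> S"
    using partition_cover[OF dec_partition[OF v]] by blast
  with dec_refines[OF v l S(1) X S(2) T] show "\<exists>S\<in>m_dec M (l - 1). T \<in> S \<and> S \<subseteq> X" by blast
qed

lemma sum_over_blocks:
  fixes P :: "('a::finite) set set"
  assumes P: "is_partition P" and cov: "\<forall>T\<in>X. \<exists>S\<in>P. T \<in> S \<and> S \<subseteq> X"
  shows "(\<Sum>T\<in>X. g T) = (\<Sum>S\<in>blocks_in P X. \<Sum>T\<in>S. g T)"
proof -
  have X: "X = \<Union>(blocks_in P X)" using cov by blast
  have "\<forall>A\<in>blocks_in P X. \<forall>B\<in>blocks_in P X. A \<noteq> B \<longrightarrow> A \<inter> B = {}"
    using P unfolding is_partition_def by blast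
  from sum.Union_disjoint[OF _ this, of g] X show ?thesis by (simp add: comp_def)
qed

lemma sum_over_partition:
  fixes P :: "('a::finite) set set"
  assumes "is_partition P"
  shows "(\<Sum>T\<in>UNIV. g T) = (\<Sum>S\<in>P. \<Sum>T\<in>S. g T)"
  using sum_over_blocks[OF assms, of UNIV g] partition_cover[OF assms] by auto

definition edge_elems :: "('e::finite,'f::finite) bddc_setting \<Rightarrow> 'f \<Rightarrow> 'e set" where
  "edge_elems M e = {T. m_inc M T e \<noteq> 0}"

lemma edge_elems_card: "valid_setting M \<Longrightarrow> card (edge_elems M e) \<le> 2"
  unfolding edge_elems_def using valid_setting_parts(1) by blast

lemma edge_elems_opposite:
  "valid_setting M \<Longrightarrow> T \<noteq> T' \<Longrightarrow> T \<in> edge_elems M e \<Longrightarrow> T' \<in> edge_elems M e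
    \<Longrightarrow> m_inc M T' e = - m_inc M T e"
  unfolding edge_elems_def using valid_setting_parts(2) by blast

lemma edge_elems_two:
  assumes v: "valid_setting M" and "T \<in> edge_elems M e" "T' \<in> edge_elems M e" "T'' \<in> edge_elems M e"
    and "T \<noteq> T'"
  shows "T'' = T \<or> T'' = T'"
proof (rule ccontr)
  assume "\<not> ?thesis"
  then have "T'' \<noteq> T" "T'' \<noteq> T'" by auto
  then have "card {T, T', T''} = 3" using assms(5) by simp
  moreover have "card {T, T', T''} \<le> card (edge_elems M e)"
    by (rule card_mono) (use assms in auto)
  ultimately show False using edge_elems_card[OF v, of e] by simp
qed

lemma hits_disjoint_family:
  assumes "finite Q" "\<forall>S1\<in>Q. \<forall>S2\<in>Q. S1 \<noteq> S2 \<longrightarrow> S1 \<inter> S2 = {}" "card A \<le> 2" "finite A"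
    "T \<in> A" "\<forall>S\<in>Q. T \<notin> S"
  shows "(\<Sum>S\<in>Q. of_bool (A \<inter> S \<noteq> {}) :: real) = of_bool (\<exists>S\<in>Q. A \<inter> S \<noteq> {})"
proof (cases "\<exists>S\<in>Q. A \<inter> S \<noteq> {}")
  case True
  then obtain S0 where S0: "S0 \<in> Q" "A \<inter> S0 \<noteq> {}" by blast
  have others: "A \<inter> S1 = {}" if "S1 \<in> Q" "S1 \<noteq> S0" for S1
  proof (rule ccontr)
    assume "A \<inter> S1 \<noteq> {}"
    then obtain a1 a0 where "a1 \<in> A" "a1 \<in> S1" "a0 \<in> A" "a0 \<in> S0" using S0 by blast
    moreover have "a0 \<noteq> a1" using assms(2) S0(1) that calculation by blast
    moreover have "T \<noteq> a0" "T \<noteq> a1" using assms(6) S0(1) that calculation by auto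
    ultimately have "card {T, a0, a1} = 3" by simp
    moreover have "card {T, a0, a1} \<le> card A" by (rule card_mono) (use assms \<open>a0 \<in> A\<close> \<open>a1 \<in> A\<close> in auto)
    ultimately show False using assms(3) by simp
  qed
  have "(\<Sum>S\<in>Q. of_bool (A \<inter> S \<noteq> {}) :: real)
      = of_bool (A \<inter> S0 \<noteq> {}) + (\<Sum>S\<in>Q - {S0}. of_bool (A \<inter> S \<noteq> {}))"
    using sum.remove[OF assms(1) S0(1)] by blast
  also have "(\<Sum>S\<in>Q - {S0}. of_bool (A \<inter> S \<noteq> {}) :: real) = 0"
    by (rule sum.neutral) (use others in auto)
  finally show ?thesis using S0 True by simp
qed simp

lemma count_within:
  assumes v: "valid_setting M" and P: "is_partition P" and cov: "\<forall>T\<in>Y. \<exists>S\<in>P. T \<in> S \<and> S \<subseteq> Y"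
    and S: "S \<in> P" "S \<subseteq> Y" and T: "T \<in> S" "T \<in> edge_elems M e"
  shows "of_bool (edge_elems M e \<subseteq> Y) =
         of_bool (edge_elems M e \<subseteq> S) + (\<Sum>S'\<in>blocks_in P Y - {S}. of_bool (edge_elems M e \<inter> S' \<noteq> {}) :: real)"
proof -
  let ?A = "edge_elems M e" and ?Q = "blocks_in P Y - {S}"
  have count: "(\<Sum>S'\<in>?Q. of_bool (?A \<inter> S' \<noteq> {})) = (of_bool (\<exists>S'\<in>?Q. ?A \<inter> S' \<noteq> {}) :: real)"
  proof (rule hits_disjoint_family)
    show "\<forall>S1\<in>?Q. \<forall>S2\<in>?Q. S1 \<noteq> S2 \<longrightarrow> S1 \<inter> S2 = {}" using P unfolding is_partition_def by blast
    show "\<forall>S'\<in>?Q. T \<notin> S'" using partition_unique[OF P S(1)] T(1) by blast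
  qed (use edge_elems_card[OF v] T in auto)
  have "(\<exists>S'\<in>?Q. ?A \<inter> S' \<noteq> {}) \<longleftrightarrow> ?A \<subseteq> Y \<and> \<not> ?A \<subseteq> S"
  proof
    assume "\<exists>S'\<in>?Q. ?A \<inter> S' \<noteq> {}"
    then obtain S' a where S': "S' \<in> P" "S' \<subseteq> Y" "S' \<noteq> S" and a: "a \<in> ?A" "a \<in> S'" by blast
    have "a \<notin> S" using partition_unique[OF P S(1) S'(1)] S'(3) a(2) by blast
    moreover have "?A \<subseteq> {T, a}" using edge_elems_two[OF v T(2) a(1)] T(1) calculation by blast
    ultimately show "?A \<subseteq> Y \<and> \<not> ?A \<subseteq> S" using T(1) S(2) a S'(2) by blast
  next
    assume "?A \<subseteq> Y \<and> \<not> ?A \<subseteq> S"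
    then obtain b where b: "b \<in> ?A" "b \<notin> S" "b \<in> Y" by blast
    then obtain S' where "S' \<in> P" "b \<in> S'" "S' \<subseteq> Y" using cov by blast
    then show "\<exists>S'\<in>?Q. ?A \<inter> S' \<noteq> {}" using b by blast
  qed
  then show ?thesis unfolding count using S(2) by auto
qed

lemma count_outside:
  assumes v: "valid_setting M" and P: "is_partition P" and cov: "\<forall>T\<in>Y'. \<exists>S\<in>P. T \<in> S \<and> S \<subseteq> Y'"
    and T: "T \<notin> Y'" "T \<in> edge_elems M e"
  shows "(\<Sum>S'\<in>blocks_in P Y'. of_bool (edge_elems M e \<inter> S' \<noteq> {}) :: real) =
         of_bool (edge_elems M e \<inter> Y' \<noteq> {})"
proof -
  let ?A = "edge_elems M e" and ?Q = "blocks_in P Y'"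
  have "(\<Sum>S'\<in>?Q. of_bool (?A \<inter> S' \<noteq> {})) = (of_bool (\<exists>S'\<in>?Q. ?A \<inter> S' \<noteq> {}) :: real)"
  proof (rule hits_disjoint_family)
    show "\<forall>S1\<in>?Q. \<forall>S2\<in>?Q. S1 \<noteq> S2 \<longrightarrow> S1 \<inter> S2 = {}" using P unfolding is_partition_def by blast
  qed (use edge_elems_card[OF v] T in auto)
  moreover have "(\<exists>S'\<in>?Q. ?A \<inter> S' \<noteq> {}) \<longleftrightarrow> ?A \<inter> Y' \<noteq> {}" using cov by blast
  ultimately show ?thesis by simp
qed

section \<open>Fluxes through regions\<close>

(* Sum over the elements T of X of the flux of v through the edges of T, each edge
   weighted by c. All fluxes through regions below are instances of this. *)
definition weighted_flux ::
  "('e::finite,'f::finite) bddc_setting \<Rightarrow> ('f \<Rightarrow> real) \<Rightarrow> ('e,'f) flux \<Rightarrow> 'e set \<Rightarrow> real" where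
  "weighted_flux M c v X = (\<Sum>T\<in>X. \<Sum>e\<in>UNIV. c e * (m_inc M T e * v T e))"

(* total outward flux of v out of the elements of X: the integral of div v over X *)
definition outflux :: "('e::finite,'f::finite) bddc_setting \<Rightarrow> ('e,'f) flux \<Rightarrow> 'e set \<Rightarrow> real" where
  "outflux M v X = weighted_flux M (\<lambda>e. 1) v X"

definition inner_flux :: "('e::finite,'f::finite) bddc_setting \<Rightarrow> ('e,'f) flux \<Rightarrow> 'e set \<Rightarrow> real" where
  "inner_flux M v X = weighted_flux M (\<lambda>e. of_bool (edge_elems M e \<subseteq> X)) v X"

definition face_flux :: "('e::finite,'f::finite) bddc_setting \<Rightarrow> ('e,'f) flux \<Rightarrow> 'e set \<Rightarrow> 'e set \<Rightarrow> real" where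
  "face_flux M v X X' = (\<Sum>e\<in>edges_between M X X'. \<Sum>T\<in>X. m_inc M T e * v T e)"

lemma face_flux_weighted:
  "face_flux M v X X' = weighted_flux M (\<lambda>e. of_bool (edge_elems M e \<inter> X' \<noteq> {})) v X"
proof -
  have "face_flux M v X X' = (\<Sum>T\<in>X. \<Sum>e\<in>UNIV. of_bool (e \<in> edges_between M X X') * (m_inc M T e * v T e))"
    unfolding face_flux_def by (subst sum.swap) simp
  also have "\<dots> = weighted_flux M (\<lambda>e. of_bool (edge_elems M e \<inter> X' \<noteq> {})) v X"
    unfolding weighted_flux_def edges_between_def edge_elems_def
    by (intro sum.cong refl) (auto simp: of_bool_def)
  finally show ?thesis .
qed

lemma weighted_flux_cong:
  assumes "\<And>T e. T \<in> X \<Longrightarrow> T \<in> edge_elems M e \<Longrightarrow> c e = d e"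
  shows "weighted_flux M c v X = weighted_flux M d v X"
  unfolding weighted_flux_def using assms by (intro sum.cong refl) (auto simp: edge_elems_def)

lemma weighted_flux_local:
  "(\<forall>T\<in>X. v T = w T) \<Longrightarrow> weighted_flux M c v X = weighted_flux M c w X"
  unfolding weighted_flux_def by simp

lemma weighted_flux_add:
  "weighted_flux M (\<lambda>e. c e + d e) v X = weighted_flux M c v X + weighted_flux M d v X"
  unfolding weighted_flux_def by (simp add: distrib_right sum.distrib)

lemma weighted_flux_sum:
  "weighted_flux M (\<lambda>e. \<Sum>i\<in>I. c i e) v X = (\<Sum>i\<in>I. weighted_flux M (c i) v X)"
  unfolding weighted_flux_def by (simp add: sum_distrib_right sum.swap[of _ I])

lemma weighted_flux_comb:
  "weighted_flux M c (\<lambda>T e. a T e + b T e - d T e) X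
     = weighted_flux M c a X + weighted_flux M c b X - weighted_flux M c d X"
  unfolding weighted_flux_def by (simp add: algebra_simps sum.distrib sum_subtractf)

lemma weighted_flux_blocks:
  fixes P :: "('e::finite) set set"
  assumes "is_partition P" "\<forall>T\<in>X. \<exists>S\<in>P. T \<in> S \<and> S \<subseteq> X"
  shows "weighted_flux M c v X = (\<Sum>S\<in>blocks_in P X. weighted_flux M c v S)"
  unfolding weighted_flux_def by (rule sum_over_blocks[OF assms])

lemma face_flux_local: "(\<forall>T\<in>X. v T = w T) \<Longrightarrow> face_flux M v X X' = face_flux M w X X'"
  unfolding face_flux_weighted by (rule weighted_flux_local)

lemma inner_flux_local: "(\<forall>T\<in>X. v T = w T) \<Longrightarrow> inner_flux M v X = inner_flux M w X"
  unfolding inner_flux_def by (rule weighted_flux_local)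

lemma face_flux_add:
  "face_flux M (\<lambda>T e. a T e + b T e) X X' = face_flux M a X X' + face_flux M b X X'"
  unfolding face_flux_def by (simp add: distrib_left sum.distrib)

lemma face_flux_no_edges: "edges_between M X X' = {} \<Longrightarrow> face_flux M v X X' = 0"
  unfolding face_flux_def by simp

lemma edges_between_sym: "edges_between M X X' = edges_between M X' X"
  unfolding edges_between_def by blast

lemma flen_sym: "flen M X X' = flen M X' X"
  unfolding flen_def using edges_between_sym by metis

lemma faces_sym: "(X, X') \<in> faces M m \<longleftrightarrow> (X', X) \<in> faces M m"
  unfolding faces_def using edges_between_sym by blast

lemma flen_pos: "valid_setting M \<Longrightarrow> edges_between M S S' \<noteq> {} \<Longrightarrow> flen M S S' > 0"
  unfolding flen_def by (rule sum_pos) (simp_all add: valid_len_pos)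

lemma face_flux_dval:
  assumes "valid_setting M"
  shows "face_flux M v S S' = flen M S S' * dval M v S S'"
proof (cases "edges_between M S S' = {}")
  case False
  then show ?thesis using flen_pos[OF assms False] unfolding face_flux_def dval_def by simp
qed (simp add: face_flux_def dval_def)

lemma face_flux_antisym_dval:
  "valid_setting M \<Longrightarrow> dval M v S S' = - dval M v S' S \<Longrightarrow> face_flux M v S S' = - face_flux M v S' S"
  by (simp add: face_flux_dval flen_sym)

section \<open>Splitting fluxes along the hierarchy\<close>

lemma outflux_split:
  assumes v: "valid_setting M" and P: "is_partition P" and X: "X \<in> P"
  shows "outflux M v X = inner_flux M v X + (\<Sum>X'\<in>P - {X}. face_flux M v X X')"
proof -
  have "inner_flux M v X + (\<Sum>X'\<in>P - {X}. face_flux M v X X')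
     = weighted_flux M (\<lambda>e. of_bool (edge_elems M e \<subseteq> X)
                           + (\<Sum>X'\<in>P - {X}. of_bool (edge_elems M e \<inter> X' \<noteq> {}))) v X"
    by (simp only: inner_flux_def face_flux_weighted weighted_flux_add weighted_flux_sum)
  also have "\<dots> = weighted_flux M (\<lambda>e. 1) v X"
  proof (rule weighted_flux_cong)
    fix T e assume "T \<in> X" "T \<in> edge_elems M e"
    have "\<forall>T\<in>UNIV. \<exists>S\<in>P. T \<in> S \<and> S \<subseteq> UNIV" using partition_cover[OF P] by blast
    from count_within[OF v P this X subset_UNIV \<open>T \<in> X\<close> \<open>T \<in> edge_elems M e\<close>]
    have "(1::real) = of_bool (edge_elems M e \<subseteq> X) + (\<Sum>X'\<in>P - {X}. of_bool (edge_elems M e \<inter> X' \<noteq> {}))"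
      by (simp only: subset_UNIV of_bool_eq simp_thms Collect_mem_eq)
    then show "of_bool (edge_elems M e \<subseteq> X) + (\<Sum>X'\<in>P - {X}. of_bool (edge_elems M e \<inter> X' \<noteq> {})) = (1::real)"
      by (rule sym)
  qed
  finally show ?thesis unfolding outflux_def ..
qed

definition subfaces :: "('e::finite,'f::finite) bddc_setting \<Rightarrow> nat \<Rightarrow> 'e set \<Rightarrow> 'e set \<Rightarrow> ('e set \<times> 'e set) set" where
  "subfaces M k X X' = {(S,S') \<in> faces M (k - 1). S \<subseteq> X \<and> S' \<subseteq> X'}"

lemma sum_subfaces:
  assumes v: "valid_setting M" and k: "1 \<le> k" "k \<le> m_L M - 1" and XX: "X \<inter> X' = {}"
    and g: "\<And>S S'. edges_between M S S' = {} \<Longrightarrow> g S S' = 0"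
  shows "(\<Sum>(S,S')\<in>subfaces M k X X'. g S S')
       = (\<Sum>S\<in>blocks_in (m_dec M (k - 1)) X. \<Sum>S'\<in>blocks_in (m_dec M (k - 1)) X'. g S S')"
proof -
  let ?A = "blocks_in (m_dec M (k - 1)) X" and ?B = "blocks_in (m_dec M (k - 1)) X'"
  have P': "is_partition (m_dec M (k - 1))" using dec_partition[OF v] k by simp
  have "(\<Sum>(S,S')\<in>subfaces M k X X'. g S S') = (\<Sum>(S,S')\<in>?A \<times> ?B. g S S')"
  proof (rule sum.mono_neutral_left)
    show "subfaces M k X X' \<subseteq> ?A \<times> ?B" unfolding subfaces_def faces_def by blast
    show "\<forall>i\<in>?A \<times> ?B - subfaces M k X X'. (case i of (S, S') \<Rightarrow> g S S') = 0"
    proof (clarify)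
      fix S S' assume S: "S \<in> m_dec M (k - 1)" "S \<subseteq> X" "S' \<in> m_dec M (k - 1)" "S' \<subseteq> X'"
        and "(S, S') \<notin> subfaces M k X X'"
      moreover have "S \<noteq> S'" using partition_nonempty[OF P' S(1)] S XX by blast
      ultimately show "g S S' = 0" using g unfolding subfaces_def faces_def by blast
    qed
  qed simp
  then show ?thesis by (simp add: sum.cartesian_product)
qed

lemma face_flux_refine:
  assumes v: "valid_setting M" and k: "1 \<le> k" "k \<le> m_L M - 1"
    and X: "X \<in> m_dec M k" and X': "X' \<in> m_dec M k" "X \<noteq> X'"
  shows "face_flux M v X X' = (\<Sum>(S,S')\<in>subfaces M k X X'. face_flux M v S S')"
proof -
  let ?A = "blocks_in (m_dec M (k - 1)) X" and ?B = "blocks_in (m_dec M (k - 1)) X'"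
  let ?hit = "\<lambda>Y e. of_bool (edge_elems M e \<inter> Y \<noteq> {}) :: real"
  have P': "is_partition (m_dec M (k - 1))" using dec_partition[OF v] k by simp
  have XX: "X \<inter> X' = {}" using partition_disjoint[OF dec_partition[OF v k(2)] X X'] .
  have "(\<Sum>(S,S')\<in>subfaces M k X X'. face_flux M v S S') = (\<Sum>S\<in>?A. \<Sum>S'\<in>?B. face_flux M v S S')"
    by (rule sum_subfaces[OF v k XX face_flux_no_edges])
  also have "\<dots> = (\<Sum>S\<in>?A. weighted_flux M (\<lambda>e. \<Sum>S'\<in>?B. ?hit S' e) v S)"
    by (simp only: face_flux_weighted weighted_flux_sum)
  also have "\<dots> = (\<Sum>S\<in>?A. weighted_flux M (?hit X') v S)"
  proof (intro sum.cong refl weighted_flux_cong)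
    fix S T e assume "S \<in> ?A" "T \<in> S" "T \<in> edge_elems M e"
    then have "T \<notin> X'" using XX by blast
    show "(\<Sum>S'\<in>?B. ?hit S' e) = ?hit X' e"
      by (rule count_outside[OF v P' dec_children_cover[OF v k X'(1)] \<open>T \<notin> X'\<close> \<open>T \<in> edge_elems M e\<close>])
  qed
  also have "\<dots> = face_flux M v X X'"
    unfolding face_flux_weighted by (rule weighted_flux_blocks[OF P' dec_children_cover[OF v k X], symmetric])
  finally show ?thesis ..
qed

lemma inner_flux_refine:
  assumes v: "valid_setting M" and k: "1 \<le> k" "k \<le> m_L M - 1" and X: "X \<in> m_dec M k"
  shows "inner_flux M v X = (\<Sum>S\<in>blocks_in (m_dec M (k - 1)) X. inner_flux M v S
                              + (\<Sum>S'\<in>blocks_in (m_dec M (k - 1)) X - {S}. face_flux M v S S'))"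
proof -
  let ?A = "blocks_in (m_dec M (k - 1)) X"
  have P': "is_partition (m_dec M (k - 1))" using dec_partition[OF v] k by simp
  have cov: "\<forall>T\<in>X. \<exists>S\<in>m_dec M (k - 1). T \<in> S \<and> S \<subseteq> X" by (rule dec_children_cover[OF v k X])
  have "inner_flux M v X = (\<Sum>S\<in>?A. weighted_flux M (\<lambda>e. of_bool (edge_elems M e \<subseteq> X)) v S)"
    unfolding inner_flux_def by (rule weighted_flux_blocks[OF P' cov])
  also have "\<dots> = (\<Sum>S\<in>?A. weighted_flux M (\<lambda>e. of_bool (edge_elems M e \<subseteq> S)
                    + (\<Sum>S'\<in>?A - {S}. of_bool (edge_elems M e \<inter> S' \<noteq> {}))) v S)"
  proof (intro sum.cong refl weighted_flux_cong)
    fix S T e assume "S \<in> ?A" "T \<in> S" "T \<in> edge_elems M e"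
    then show "of_bool (edge_elems M e \<subseteq> X) = of_bool (edge_elems M e \<subseteq> S)
                    + (\<Sum>S'\<in>?A - {S}. of_bool (edge_elems M e \<inter> S' \<noteq> {}) :: real)"
      using count_within[OF v P' cov] by blast
  qed
  finally show ?thesis
    by (simp only: inner_flux_def face_flux_weighted weighted_flux_add weighted_flux_sum)
qed

definition subface_len :: "('e::finite,'f::finite) bddc_setting \<Rightarrow> nat \<Rightarrow> 'e set \<Rightarrow> 'e set \<Rightarrow> real" where
  "subface_len M k X X' = (\<Sum>(S,S')\<in>subfaces M k X X'. flen M S S')"

lemma subfaces_swap: "subfaces M k X' X = prod.swap ` subfaces M k X X'"
proof (rule set_eqI)
  fix p
  show "p \<in> subfaces M k X' X \<longleftrightarrow> p \<in> prod.swap ` subfaces M k X X'"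
    by (cases p) (auto simp: subfaces_def image_iff faces_sym)
qed

lemma sum_subfaces_swap:
  "(\<Sum>(S,S')\<in>subfaces M k X' X. g S S') = (\<Sum>(S,S')\<in>subfaces M k X X'. g S' S)"
  by (subst subfaces_swap, subst sum.reindex) (auto simp: case_prod_unfold)

lemma subface_len_sym: "subface_len M k X X' = subface_len M k X' X"
  unfolding subface_len_def by (subst sum_subfaces_swap) (simp add: flen_sym)

lemma subface_len_pos:
  assumes "valid_setting M" "subfaces M k X X' \<noteq> {}"
  shows "subface_len M k X X' > 0"
  unfolding subface_len_def
proof (rule sum_pos)
  fix i assume "i \<in> subfaces M k X X'"
  then show "0 < (case i of (S, S') \<Rightarrow> flen M S S')"
    using flen_pos[OF assms(1)] unfolding subfaces_def faces_def by auto
qed (use assms(2) in simp_all)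

lemma face_flux_cavg:
  assumes v: "valid_setting M" and k: "1 \<le> k" "k \<le> m_L M - 1"
    and X: "X \<in> m_dec M k" and X': "X' \<in> m_dec M k" "X \<noteq> X'"
  shows "face_flux M w X X' = subface_len M k X X' * cavg M k w X X'"
proof -
  have ff: "face_flux M w X X' = (\<Sum>(S,S')\<in>subfaces M k X X'. flen M S S' * dval M w S S')"
    unfolding face_flux_refine[OF v k X X'] by (simp add: face_flux_dval[OF v] case_prod_unfold)
  show ?thesis
  proof (cases "subfaces M k X X' = {}")
    case True
    then show ?thesis using ff by (simp add: subface_len_def)
  next
    case False
    have "cavg M k w X X' = face_flux M w X X' / subface_len M k X X'"
      unfolding cavg_def ff subface_len_def subfaces_def by simp
    then show ?thesis using subface_len_pos[OF v False] by simp
  qed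
qed

lemma Wt_face_flux_antisym:
  assumes v: "valid_setting M" and k: "1 \<le> k" "k \<le> m_L M - 1" and w: "w \<in> Wt_of M k Ws"
    and X: "X \<in> m_dec M k" and X': "X' \<in> m_dec M k" "X \<noteq> X'"
  shows "face_flux M w X X' = - face_flux M w X' X"
proof (cases "(X, X') \<in> faces M k")
  case True
  then have "cavg M k w X X' = - cavg M k w X' X" using w unfolding Wt_of_def by blast
  then show ?thesis
    using face_flux_cavg[OF v k X X'] face_flux_cavg[OF v k X'(1) X X'(2)[symmetric]]
      subface_len_sym[of M k X X'] by simp
next
  case False
  then have "edges_between M X X' = {}" using X X' unfolding faces_def by blast
  then show ?thesis using edges_between_sym[of M X X'] by (simp add: face_flux_no_edges)
qed

lemma WtD_face_flux_zero:
  assumes v: "valid_setting M" and k: "1 \<le> k" "k \<le> m_L M - 1" and w: "w \<in> WtD_of M k Ws"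
    and X: "X \<in> m_dec M k" and X': "X' \<in> m_dec M k" "X \<noteq> X'"
  shows "face_flux M w X X' = 0"
proof (cases "(X, X') \<in> faces M k")
  case True
  then have "cavg M k w X X' = 0" using w unfolding WtD_of_def by blast
  then show ?thesis using face_flux_cavg[OF v k X X'] by simp
next
  case False
  then have "edges_between M X X' = {}" using X X' unfolding faces_def by blast
  then show ?thesis by (rule face_flux_no_edges)
qed

lemma rt0_edge_balance:
  assumes v: "valid_setting M" and u: "u \<in> RT0 M" and A: "edge_elems M e \<subseteq> X"
  shows "(\<Sum>T\<in>X. m_inc M T e * u T e) = 0"
proof -
  have "(\<Sum>T\<in>X. m_inc M T e * u T e) = (\<Sum>T\<in>edge_elems M e. m_inc M T e * u T e)"
    by (rule sum.mono_neutral_right) (use A in \<open>auto simp: edge_elems_def\<close>)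
  also have "\<dots> = 0"
  proof (cases "\<exists>T0 T1. T0 \<in> edge_elems M e \<and> T1 \<in> edge_elems M e \<and> T0 \<noteq> T1")
    case True
    then obtain T0 T1 where T: "T0 \<in> edge_elems M e" "T1 \<in> edge_elems M e" "T0 \<noteq> T1" by blast
    then have "edge_elems M e = {T0, T1}" using edge_elems_two[OF v T(1,2) _ T(3)] by blast
    moreover have "u T1 e = u T0 e" using u T(1,2) unfolding RT0_def edge_elems_def by blast
    moreover have "m_inc M T1 e = - m_inc M T0 e" by (rule edge_elems_opposite[OF v T(3,1,2)])
    ultimately show ?thesis using T(3) by simp
  next
    case False
    (* a boundary edge: the flux vanishes there *)
    have "u T e = 0" if "T \<in> edge_elems M e" for T
      using u that False unfolding RT0_def edge_elems_def by blast
    then show ?thesis by simp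
  qed
  finally show ?thesis .
qed

lemma rt0_inner_flux_zero:
  assumes "valid_setting M" "u \<in> RT0 M"
  shows "inner_flux M u X = 0"
proof -
  have "inner_flux M u X
      = (\<Sum>e\<in>UNIV. of_bool (edge_elems M e \<subseteq> X) * (\<Sum>T\<in>X. m_inc M T e * u T e))"
    unfolding inner_flux_def weighted_flux_def by (subst sum.swap) (simp add: sum_distrib_left)
  then show ?thesis using rt0_edge_balance[OF assms] by simp
qed

lemma sum_offdiag_antisym:
  fixes g :: "'a \<Rightarrow> 'a \<Rightarrow> real"
  assumes "finite A" "\<And>S S'. S \<in> A \<Longrightarrow> S' \<in> A \<Longrightarrow> S \<noteq> S' \<Longrightarrow> g S S' = - g S' S"
  shows "(\<Sum>S\<in>A. \<Sum>S'\<in>A - {S}. g S S') = 0"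
proof -
  define h where "h S S' = (if S = S' then 0 else g S S')" for S S'
  have "(\<Sum>S'\<in>A - {S}. g S S') = (\<Sum>S'\<in>A. h S S')" if "S \<in> A" for S
  proof -
    have "(\<Sum>S'\<in>A. h S S') = h S S + (\<Sum>S'\<in>A - {S}. h S S')" by (rule sum.remove[OF assms(1) that])
    also have "(\<Sum>S'\<in>A - {S}. h S S') = (\<Sum>S'\<in>A - {S}. g S S')" by (rule sum.cong) (auto simp: h_def)
    finally show ?thesis by (simp add: h_def)
  qed
  then have "(\<Sum>S\<in>A. \<Sum>S'\<in>A - {S}. g S S') = (\<Sum>S\<in>A. \<Sum>S'\<in>A. h S S')"
    by (rule sum.cong[OF refl])
  also have "\<dots> = (\<Sum>S'\<in>A. \<Sum>S\<in>A. - h S' S)"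
  proof (subst sum.swap, intro sum.cong refl)
    fix S' S assume "S' \<in> A" "S \<in> A"
    then show "h S S' = - h S' S" using assms(2)[of S S'] by (cases "S = S'") (simp_all add: h_def)
  qed
  also have "\<dots> = - (\<Sum>S\<in>A. \<Sum>S'\<in>A. h S S')" by (simp add: sum_negf)
  finally show ?thesis
    using \<open>(\<Sum>S\<in>A. \<Sum>S'\<in>A - {S}. g S S') = (\<Sum>S\<in>A. \<Sum>S'\<in>A. h S S')\<close> by linarith
qed

(* Every function of W^k has zero flux through the edges interior to a level-k
   substructure: on level 1 by continuity of RT0 functions, on higher levels
   because the children's interior fluxes vanish by induction and the coarse
   degrees of freedom between children are continuous. *)
lemma inner_flux_W_zero:
  assumes v: "valid_setting M"
  shows "1 \<le> k \<Longrightarrow> k \<le> m_L M - 1 \<Longrightarrow> w \<in> FluxW M k \<Longrightarrow> X \<in> m_dec M k \<Longrightarrow> inner_flux M w X = 0"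
proof (induction k arbitrary: w X)
  case (Suc j)
  obtain u where u: "u \<in> Ufull M (Suc j)" "\<forall>T\<in>X. w T = u T"
    using Suc.prems(3,4) unfolding FluxW_def Wof_def by blast
  have "inner_flux M w X = inner_flux M u X" by (rule inner_flux_local[OF u(2)])
  also have "\<dots> = 0"
  proof (cases "j = 0")
    case True
    then have "u \<in> RT0 M" using u(1) by simp
    then show ?thesis by (rule rt0_inner_flux_zero[OF v])
  next
    case False
    then have j: "1 \<le> j" "j \<le> m_L M - 1" using Suc.prems by simp_all
    have "u \<in> WtPi_of M j (FluxW M j)" using u(1) False unfolding FluxW_def by simp
    then have uWt: "u \<in> Wt_of M j (FluxW M j)" and uW: "u \<in> FluxW M j"
      unfolding WtPi_of_def Wt_of_def by auto
    let ?A = "blocks_in (m_dec M j) X"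
    have "inner_flux M u X = (\<Sum>S\<in>?A. inner_flux M u S + (\<Sum>S'\<in>?A - {S}. face_flux M u S S'))"
      using inner_flux_refine[OF v _ Suc.prems(2,4)] by simp
    also have "\<dots> = (\<Sum>S\<in>?A. \<Sum>S'\<in>?A - {S}. face_flux M u S S')"
      using Suc.IH[OF j uW] by simp
    also have "\<dots> = 0"
    proof (rule sum_offdiag_antisym)
      fix S S' assume "S \<in> ?A" "S' \<in> ?A" "S \<noteq> S'"
      then show "face_flux M u S S' = - face_flux M u S' S"
        using Wt_face_flux_antisym[OF v j uWt] by blast
    qed simp
    finally show ?thesis .
  qed
  finally show ?case .
qed simp

section \<open>Balanced fluxes\<close>

definition flux_balanced :: "('e::finite,'f::finite) bddc_setting \<Rightarrow> nat \<Rightarrow> ('e,'f) flux \<Rightarrow> bool" where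
  "flux_balanced M k v \<longleftrightarrow> (\<forall>X\<in>m_dec M k. inner_flux M v X = 0) \<and>
     (\<forall>X\<in>m_dec M k. \<forall>X'\<in>m_dec M k. X \<noteq> X' \<longrightarrow> face_flux M v X X' = - face_flux M v X' X)"

lemma flux_balanced_comb:
  assumes "flux_balanced M k a" "flux_balanced M k b" "flux_balanced M k c"
  shows "flux_balanced M k (\<lambda>T e. a T e + b T e - c T e)"
  unfolding flux_balanced_def
proof (intro conjI ballI impI)
  fix X assume "X \<in> m_dec M k"
  then show "inner_flux M (\<lambda>T e. a T e + b T e - c T e) X = 0"
    using assms unfolding flux_balanced_def inner_flux_def weighted_flux_comb by simp
next
  fix X X' assume X: "X \<in> m_dec M k" "X' \<in> m_dec M k" "X \<noteq> X'"
  have "face_flux M v X X' = - face_flux M v X' X" if "flux_balanced M k v" for v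
    using that X unfolding flux_balanced_def by blast
  from this[OF assms(1)] this[OF assms(2)] this[OF assms(3)]
  show "face_flux M (\<lambda>T e. a T e + b T e - c T e) X X' = - face_flux M (\<lambda>T e. a T e + b T e - c T e) X' X"
    unfolding face_flux_weighted weighted_flux_comb by linarith
qed

lemma flux_balanced_WtilPi:
  assumes v: "valid_setting M" and k: "1 \<le> k" "k \<le> m_L M - 1" and w: "w \<in> WtilPi M k"
  shows "flux_balanced M k w"
proof -
  have "w \<in> Wt_of M k (FluxW M k)" "w \<in> FluxW M k"
    using w unfolding WtilPi_def WtPi_of_def Wt_of_def by auto
  then show ?thesis
    unfolding flux_balanced_def using inner_flux_W_zero[OF v k] Wt_face_flux_antisym[OF v k] by blast
qed

lemma FluxW_Suc_local:
  assumes v: "valid_setting M" and k: "1 \<le> k" "Suc k \<le> m_L M - 1"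
    and w: "w \<in> FluxW M (Suc k)" and X: "X \<in> m_dec M k"
  shows "\<exists>Y\<in>m_dec M (Suc k). X \<subseteq> Y \<and> (\<exists>u\<in>WtilPi M k. \<forall>T\<in>Y. w T = u T)"
proof -
  obtain Y where Y: "Y \<in> m_dec M (Suc k)" "X \<subseteq> Y" using dec_nested[OF v _ k(2), of X] X by auto
  moreover obtain u where "u \<in> Ufull M (Suc k)" "\<forall>T\<in>Y. w T = u T"
    using w Y(1) unfolding FluxW_def Wof_def by blast
  moreover have "Ufull M (Suc k) = WtilPi M k" using k(1) unfolding WtilPi_def FluxW_def by simp
  ultimately show ?thesis by blast
qed

lemma Gamma_if_separated:
  assumes v: "valid_setting M" and k: "1 \<le> k" "k \<le> m_L M - 1"
    and f: "(S, S') \<in> faces M (k - 1)" and X: "X \<in> m_dec M k" "X' \<in> m_dec M k" "X \<noteq> X'"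
    and sub: "S \<subseteq> X" "S' \<subseteq> X'"
  shows "(S, S') \<in> Gamma M k"
proof -
  have P': "is_partition (m_dec M (k - 1))" using dec_partition[OF v] k by simp
  obtain T T' where TT: "T \<in> S" "T' \<in> S'"
    using f partition_nonempty[OF P'] unfolding faces_def by blast
  have "\<not> (\<exists>R\<in>m_dec M k. S \<subseteq> R \<and> S' \<subseteq> R)"
  proof
    assume "\<exists>R\<in>m_dec M k. S \<subseteq> R \<and> S' \<subseteq> R"
    then obtain R where R: "R \<in> m_dec M k" "S \<subseteq> R" "S' \<subseteq> R" by blast
    have Pk: "is_partition (m_dec M k)" by (rule dec_partition[OF v k(2)])
    have "R = X" by (rule partition_unique[OF Pk R(1) X(1), of T]) (use TT sub R in auto)
    moreover have "R = X'" by (rule partition_unique[OF Pk R(1) X(2), of T']) (use TT sub R in auto)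
    ultimately show False using X(3) by simp
  qed
  then show ?thesis using f unfolding Gamma_def by simp
qed

(* the face fluxes of a function of U^(k+1) are antisymmetric on level k: inside a
   level-(k+1) substructure because it is a W~^k function there, across level-(k+1)
   substructures because it is continuous across Gamma^(k+1) *)
lemma FluxU_Suc_face_antisym:
  assumes v: "valid_setting M" and k: "1 \<le> k" "Suc k \<le> m_L M - 1" and w: "w \<in> FluxU M (Suc k)"
    and X: "X \<in> m_dec M k" and X': "X' \<in> m_dec M k" "X \<noteq> X'"
  shows "face_flux M w X X' = - face_flux M w X' X"
proof -
  have k': "k \<le> m_L M - 1" using k by simp
  have wW: "w \<in> FluxW M (Suc k)" using w unfolding FluxU_def by blast
  obtain Y u where Y: "Y \<in> m_dec M (Suc k)" "X \<subseteq> Y" and u: "u \<in> WtilPi M k" "\<forall>T\<in>Y. w T = u T"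
    using FluxW_Suc_local[OF v k wW X] by blast
  obtain Y' where Y': "Y' \<in> m_dec M (Suc k)" "X' \<subseteq> Y'"
    using FluxW_Suc_local[OF v k wW X'(1)] by blast
  show ?thesis
  proof (cases "Y = Y'")
    case True
    have "face_flux M w X X' = face_flux M u X X'" "face_flux M w X' X = face_flux M u X' X"
      using u(2) Y(2) Y'(2) True by (blast intro: face_flux_local)+
    moreover have "u \<in> Wt_of M k (FluxW M k)" using u(1) unfolding WtilPi_def WtPi_of_def by blast
    ultimately show ?thesis using Wt_face_flux_antisym[OF v k(1) k' _ X X'] by simp
  next
    case False
    show ?thesis
    proof (cases "(X, X') \<in> faces M k")
      case True
      then have "(X, X') \<in> Gamma M (Suc k)"
        using Gamma_if_separated[OF v _ k(2), of X X' Y Y'] Y Y' False by simp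
      then have "dval M w X X' = - dval M w X' X" using w unfolding FluxU_def by blast
      then show ?thesis by (rule face_flux_antisym_dval[OF v])
    next
      case False
      then have "edges_between M X X' = {}" using X X' unfolding faces_def by blast
      then show ?thesis using edges_between_sym[of M X X'] by (simp add: face_flux_no_edges)
    qed
  qed
qed

lemma flux_balanced_FluxU_Suc:
  assumes v: "valid_setting M" and k: "1 \<le> k" "Suc k \<le> m_L M - 1" and w: "w \<in> FluxU M (Suc k)"
  shows "flux_balanced M k w"
  unfolding flux_balanced_def
proof (intro conjI ballI impI)
  fix X assume X: "X \<in> m_dec M k"
  have wW: "w \<in> FluxW M (Suc k)" using w unfolding FluxU_def by blast
  obtain Y u where Y: "X \<subseteq> Y" and u: "u \<in> WtilPi M k" "\<forall>T\<in>Y. w T = u T"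
    using FluxW_Suc_local[OF v k wW X] by blast
  have "inner_flux M w X = inner_flux M u X" using u(2) Y by (intro inner_flux_local) blast
  also have "\<dots> = 0"
    using flux_balanced_WtilPi[OF v k(1) _ u(1)] k X unfolding flux_balanced_def by simp
  finally show "inner_flux M w X = 0" .
qed (rule FluxU_Suc_face_antisym[OF v k w])

section \<open>The averaging operator E preserves face fluxes\<close>

(* k is constant on the top-level subdomains, so a substructure has the coefficient of its parent *)
lemma kval_parent:
  assumes v: "valid_setting M" and k: "1 \<le> k" "k \<le> m_L M - 1"
    and S: "S \<in> m_dec M (k - 1)" "S \<subseteq> X" and X: "X \<in> m_dec M k"
  shows "kval M S = kval M X"
proof -
  obtain Z where Z: "Z \<in> m_dec M (m_L M - 1)" "X \<subseteq> Z" using dec_ancestor[OF v order.refl k(2) X] by blast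
  have "S \<noteq> {}" using partition_nonempty[OF dec_partition[OF v] S(1)] k by simp
  then have "(SOME T. T \<in> S) \<in> S" by (simp add: some_in_eq)
  moreover have "(SOME T. T \<in> X) \<in> X"
    using partition_nonempty[OF dec_partition[OF v k(2)] X] by (simp add: some_in_eq)
  ultimately show ?thesis
    unfolding kval_def using valid_setting_parts(8)[OF v] Z S(2) by blast
qed

lemma ewt_sum:
  assumes "valid_setting M"
  shows "ewt M X X' + ewt M X' X = 1"
proof -
  have "kval M X > 0" "kval M X' > 0" unfolding kval_def by (simp_all add: valid_k_pos[OF assms])
  then have "kval M X powr (- m_gamma M) + kval M X' powr (- m_gamma M) > 0"
    by (simp add: add_pos_pos)
  moreover have "x / (x + y) + y / (y + x) = 1" if "x + y > 0" for x y :: real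
    using that by (simp add: add.commute[of y x] add_divide_distrib[symmetric])
  ultimately show ?thesis unfolding ewt_def by blast
qed

lemma Erel_subface_flux:
  assumes v: "valid_setting M" and k: "1 \<le> k" "k \<le> m_L M - 1" and E: "Erel M k w uB"
    and X: "X \<in> m_dec M k" "X' \<in> m_dec M k" "X \<noteq> X'" and p: "(S, S') \<in> subfaces M k X X'"
  shows "face_flux M uB S S' = ewt M X X' * face_flux M w S S' - ewt M X' X * face_flux M w S' S"
proof -
  have f: "(S, S') \<in> faces M (k - 1)" "S \<subseteq> X" "S' \<subseteq> X'" using p unfolding subfaces_def by auto
  have G: "(S, S') \<in> Gamma M k" by (rule Gamma_if_separated[OF v k f(1) X f(2,3)])
  have SS: "S \<in> m_dec M (k - 1)" "S' \<in> m_dec M (k - 1)" using f(1) unfolding faces_def by auto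
  have ewt: "ewt M S S' = ewt M X X'" "ewt M S' S = ewt M X' X"
    unfolding ewt_def using kval_parent[OF v k SS(1) f(2) X(1)] kval_parent[OF v k SS(2) f(3) X(2)] by simp_all
  have "dval M uB S S' = ewt M S S' * dval M w S S' - ewt M S' S * dval M w S' S"
    using E f(1) G unfolding Erel_def by auto
  then have d: "dval M uB S S' = ewt M X X' * dval M w S S' - ewt M X' X * dval M w S' S"
    unfolding ewt .
  show ?thesis unfolding face_flux_dval[OF v] d flen_sym[of M S' S] by (simp add: algebra_simps)
qed

lemma Erel_face_flux:
  assumes v: "valid_setting M" and k: "1 \<le> k" "k \<le> m_L M - 1"
    and E: "Erel M k (\<lambda>T e. wD T e + un T e) uB" and wD: "wD \<in> WtilD M k" and un: "flux_balanced M k un"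
    and X: "X \<in> m_dec M k" "X' \<in> m_dec M k" "X \<noteq> X'"
  shows "face_flux M uB X X' = face_flux M un X X'"
proof -
  let ?w = "\<lambda>T e. wD T e + un T e"
  let ?a = "ewt M X X'" and ?b = "ewt M X' X"
  have "face_flux M uB X X' = (\<Sum>(S,S')\<in>subfaces M k X X'. face_flux M uB S S')"
    by (rule face_flux_refine[OF v k X])
  also have "\<dots> = (\<Sum>(S,S')\<in>subfaces M k X X'. ?a * face_flux M ?w S S' - ?b * face_flux M ?w S' S)"
    by (intro sum.cong refl) (auto simp: Erel_subface_flux[OF v k E X])
  also have "\<dots> = ?a * (\<Sum>(S,S')\<in>subfaces M k X X'. face_flux M ?w S S')
                     - ?b * (\<Sum>(S,S')\<in>subfaces M k X X'. face_flux M ?w S' S)"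
    by (simp add: sum_subtractf sum_distrib_left case_prod_unfold)
  also have "(\<Sum>(S,S')\<in>subfaces M k X X'. face_flux M ?w S' S) = face_flux M ?w X' X"
    unfolding face_flux_refine[OF v k X(2,1) X(3)[symmetric]] by (rule sum_subfaces_swap[symmetric])
  also have "(\<Sum>(S,S')\<in>subfaces M k X X'. face_flux M ?w S S') = face_flux M ?w X X'"
    by (rule face_flux_refine[OF v k X, symmetric])
  also have "?a * face_flux M ?w X X' - ?b * face_flux M ?w X' X = (?a + ?b) * face_flux M un X X'"
  proof -
    have "face_flux M wD X X' = 0" "face_flux M wD X' X = 0"
      using WtD_face_flux_zero[OF v k] wD X unfolding WtilD_def by blast+
    moreover have "face_flux M un X' X = - face_flux M un X X'"
      using un X unfolding flux_balanced_def by blast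
    ultimately show ?thesis by (simp add: face_flux_add algebra_simps)
  qed
  finally show ?thesis using ewt_sum[OF v] by simp
qed

lemma Erel_outflux:
  assumes v: "valid_setting M" and k: "1 \<le> k" "k \<le> m_L M - 1"
    and E: "Erel M k (\<lambda>T e. wD T e + un T e) uB" and wD: "wD \<in> WtilD M k" and un: "flux_balanced M k un"
    and X: "X \<in> m_dec M k"
  shows "outflux M uB X = outflux M un X"
proof -
  have P: "is_partition (m_dec M k)" by (rule dec_partition[OF v k(2)])
  have "uB \<in> FluxW M k" using E unfolding Erel_def FluxU_def by blast
  then have "inner_flux M uB X = 0" by (rule inner_flux_W_zero[OF v k _ X])
  moreover have "inner_flux M un X = 0" using un X unfolding flux_balanced_def by blast
  moreover have "(\<Sum>X'\<in>m_dec M k - {X}. face_flux M uB X X') = (\<Sum>X'\<in>m_dec M k - {X}. face_flux M un X X')"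
    by (intro sum.cong refl) (use Erel_face_flux[OF v k E wD un X] in blast)
  ultimately show ?thesis unfolding outflux_split[OF v P X] by simp
qed

lemma FluxUI_outflux_zero:
  assumes v: "valid_setting M" and k: "1 \<le> k" "k \<le> m_L M - 1"
    and w: "w \<in> FluxUI M k" and X: "X \<in> m_dec M k"
  shows "outflux M w X = 0"
proof -
  have "w \<in> FluxW M k" using w unfolding FluxUI_def FluxU_def by blast
  then have "inner_flux M w X = 0" by (rule inner_flux_W_zero[OF v k _ X])
  moreover have "face_flux M w X X' = 0" if X': "X' \<in> m_dec M k" "X \<noteq> X'" for X'
  proof -
    have "face_flux M w S S' = 0" if "(S, S') \<in> subfaces M k X X'" for S S'
    proof -
      have "(S, S') \<in> Gamma M k"
        using that Gamma_if_separated[OF v k _ X X'] unfolding subfaces_def by blast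
      then show ?thesis using w face_flux_dval[OF v] unfolding FluxUI_def by auto
    qed
    then show ?thesis unfolding face_flux_refine[OF v k X X'] by (auto intro: sum.neutral)
  qed
  ultimately show ?thesis
    unfolding outflux_split[OF v dec_partition[OF v k(2)] X] by (auto intro!: sum.neutral)
qed

lemma bf_piecewise_const:
  fixes P :: "('e::finite) set set"
  assumes P: "is_partition P" and q: "\<forall>X\<in>P. \<forall>T\<in>X. \<forall>T'\<in>X. q T = q T'"
  shows "bf M v q = - (\<Sum>X\<in>P. q (SOME T. T \<in> X) * outflux M v X)"
proof -
  have "(\<Sum>T\<in>X. q T * (\<Sum>e\<in>UNIV. m_inc M T e * v T e)) = q (SOME T. T \<in> X) * outflux M v X"
    if X: "X \<in> P" for X
  proof -
    have "(SOME T. T \<in> X) \<in> X" using partition_nonempty[OF P X] by (simp add: some_in_eq)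
    then have "(\<Sum>T\<in>X. q T * (\<Sum>e\<in>UNIV. m_inc M T e * v T e))
             = (\<Sum>T\<in>X. q (SOME T. T \<in> X) * (\<Sum>e\<in>UNIV. m_inc M T e * v T e))"
      using q X by (intro sum.cong refl) (metis (no_types, lifting))
    then show ?thesis
      unfolding outflux_def weighted_flux_def by (simp add: sum_distrib_left)
  qed
  then show ?thesis unfolding bf_def sum_over_partition[OF P] by simp
qed

lemma bf_comb: "bf M (\<lambda>T e. a T e + b T e - c T e) q = bf M a q + bf M b q - bf M c q"
  unfolding bf_def by (simp add: distrib_left right_diff_distrib sum.distrib sum_subtractf)

lemma bf_add: "bf M v (\<lambda>T. q0 T + qI T) = bf M v q0 + bf M v qI"
  unfolding bf_def by (simp add: distrib_right sum.distrib)

lemma block_average: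
  fixes P :: "('a::finite) set set" and a :: "'a \<Rightarrow> real"
  assumes P: "is_partition P" and a: "\<And>T. a T > 0"
  obtains q0 where "\<forall>X\<in>P. \<forall>T\<in>X. \<forall>T'\<in>X. q0 T = q0 T'"
    and "\<forall>X\<in>P. (\<Sum>T\<in>X. a T * q0 T) = (\<Sum>T\<in>X. a T * q T)"
proof -
  define blk where "blk T = (SOME X. X \<in> P \<and> T \<in> X)" for T
  have blk: "blk T = X" if "X \<in> P" "T \<in> X" for T X
  proof -
    have "blk T \<in> P \<and> T \<in> blk T" unfolding blk_def by (rule someI[of _ X]) (use that in blast)
    then show ?thesis using partition_unique[OF P _ that(1) _ that(2)] by blast
  qed
  define q0 where "q0 T = (\<Sum>T'\<in>blk T. a T' * q T') / (\<Sum>T'\<in>blk T. a T')" for T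
  have q0: "q0 T = (\<Sum>T'\<in>X. a T' * q T') / (\<Sum>T'\<in>X. a T')" if "X \<in> P" "T \<in> X" for X T
    unfolding q0_def blk[OF that] ..
  show ?thesis
  proof (rule that; intro ballI)
    fix X T T' assume "X \<in> P" "T \<in> X" "T' \<in> X"
    then show "q0 T = q0 T'" using q0 by metis
  next
    fix X assume X: "X \<in> P"
    have "(\<Sum>T'\<in>X. a T') > 0" using partition_nonempty[OF P X] a by (simp add: sum_pos)
    then show "(\<Sum>T\<in>X. a T * q0 T) = (\<Sum>T\<in>X. a T * q T)"
      using q0[OF X] by (simp add: sum_divide_distrib[symmetric] sum_distrib_right[symmetric])
  qed
qed

lemma Qsp_mean_zero: "q \<in> Qsp M k \<Longrightarrow> (\<Sum>T\<in>UNIV. m_area M T * q T) = 0"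
  unfolding Qsp_def Q0_def Qzero_def by (auto split: if_splits)

(* Q^k is stable under subtracting a mean-preserving function that is constant on the
   level-k substructures: q is constant on level-(k-1) substructures, which lie inside
   level-k ones *)
lemma Qsp_diff_blockconst:
  assumes v: "valid_setting M" and k: "1 \<le> k" "k \<le> m_L M - 1" and q: "q \<in> Qsp M k"
    and c0: "\<forall>X\<in>m_dec M k. \<forall>T\<in>X. \<forall>T'\<in>X. q0 T = q0 T'"
    and z: "(\<Sum>T\<in>UNIV. m_area M T * (q T - q0 T)) = 0"
  shows "(\<lambda>T. q T - q0 T) \<in> Qsp M k"
proof (cases "k \<le> 1")
  case False
  have "q \<in> Q0 M (k - 1)" and Qsp: "Qsp M k = Q0 M (k - 1)" using q False unfolding Qsp_def by simp_all
  have cI: "q T - q0 T = q T' - q0 T'" if R: "R \<in> m_dec M (k - 1)" "T \<in> R" "T' \<in> R" for R T T'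
  proof -
    have "q T = q T'" using \<open>q \<in> Q0 M (k - 1)\<close> R unfolding Q0_def by blast
    moreover obtain X where "X \<in> m_dec M k" "R \<subseteq> X" using dec_nested[OF v k R(1)] by blast
    then have "q0 T = q0 T'" using c0 R(2,3) by blast
    ultimately show ?thesis by simp
  qed
  show ?thesis unfolding Qsp Q0_def Qzero_def using z by (auto intro: cI)
qed (use z in \<open>simp add: Qsp_def Qzero_def\<close>)

(* Q^k = Q^k_0 + Q^k_I: split off the blockwise averages *)
lemma Qsp_split:
  assumes v: "valid_setting M" and k: "1 \<le> k" "k \<le> m_L M - 1" and q: "q \<in> Qsp M k"
  shows "\<exists>q0 qI. q0 \<in> Q0 M k \<and> qI \<in> QI M k \<and> q = (\<lambda>T. q0 T + qI T)"
proof -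
  let ?P = "m_dec M k"
  have P: "is_partition ?P" by (rule dec_partition[OF v k(2)])
  obtain q0 where c0: "\<forall>X\<in>?P. \<forall>T\<in>X. \<forall>T'\<in>X. q0 T = q0 T'"
    and avg: "\<forall>X\<in>?P. (\<Sum>T\<in>X. m_area M T * q0 T) = (\<Sum>T\<in>X. m_area M T * q T)"
    by (rule block_average[OF P valid_area_pos[OF v], where q = q])
  define qI where "qI T = q T - q0 T" for T
  have "(\<Sum>T\<in>UNIV. m_area M T * q0 T) = (\<Sum>T\<in>UNIV. m_area M T * q T)"
    unfolding sum_over_partition[OF P] using avg by simp
  then have z0: "(\<Sum>T\<in>UNIV. m_area M T * q0 T) = 0" using Qsp_mean_zero[OF q] by simp
  have "(\<Sum>T\<in>UNIV. m_area M T * (q T - q0 T)) = 0"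
    using z0 Qsp_mean_zero[OF q] by (simp add: right_diff_distrib sum_subtractf)
  then have "qI \<in> Qsp M k" unfolding qI_def[abs_def] by (rule Qsp_diff_blockconst[OF v k q c0])
  moreover have "(\<Sum>T\<in>X. m_area M T * qI T) = 0" if "X \<in> ?P" for X
    unfolding qI_def using avg that by (simp add: right_diff_distrib sum_subtractf)
  ultimately have "qI \<in> QI M k" unfolding QI_def by blast
  moreover have "q0 \<in> Q0 M k" unfolding Q0_def Qzero_def using z0 c0 by blast
  moreover have "q = (\<lambda>T. q0 T + qI T)" unfolding qI_def by simp
  ultimately show ?thesis by blast
qed

definition U_combination :: "('e::finite,'f::finite) bddc_setting \<Rightarrow> nat \<Rightarrow> ('e,'f) flux \<Rightarrow> bool" where
  "U_combination M k u \<longleftrightarrow>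
     (\<exists>a\<in>FluxU M k. \<exists>b\<in>FluxU M k. \<exists>c\<in>FluxU M k. u = (\<lambda>T e. a T e + b T e - c T e))"

lemma U_combination_balanced:
  assumes "valid_setting M" "1 \<le> k" "Suc k \<le> m_L M - 1" "U_combination M (Suc k) u"
  shows "flux_balanced M k u"
proof -
  obtain a b c where abc: "a \<in> FluxU M (Suc k)" "b \<in> FluxU M (Suc k)" "c \<in> FluxU M (Suc k)"
    and u: "u = (\<lambda>T e. a T e + b T e - c T e)"
    using assms(4) unfolding U_combination_def by blast
  show ?thesis unfolding u by (intro flux_balanced_comb flux_balanced_FluxU_Suc[OF assms(1-3)] abc)
qed

(* If the next-level output un is balanced on level k and orthogonal to Q^k_0, the
   output u = uI + E(wD + un) - vI of level k is divergence free:
   - against Q^k_I, by the two interior Stokes problems;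
   - against Q^k_0, since uI and vI have no flux out of level-k substructures and
     E(wD + un) has the same substructure outfluxes as un. *)
lemma level_step_divfree:
  assumes v: "valid_setting M" and k: "1 \<le> k" "k \<le> m_L M - 1"
    and step: "level_step M k r C u p"
    and C: "\<And>rB un pn. C rB un pn \<Longrightarrow> flux_balanced M k un \<and> (\<forall>q\<in>Q0 M k. bf M un q = 0)"
  shows "(\<forall>q\<in>Qsp M k. bf M u q = 0) \<and> U_combination M k u"
proof -
  obtain uI pI wD un pn uB vI qI where
    uI: "uI \<in> FluxUI M k" "\<forall>q\<in>QI M k. bf M uI q = 0"
    and wD: "wD \<in> WtilD M k"
    and coarse: "C (\<lambda>y. r y - af M uI y - bf M y pI) un pn"
    and E: "Erel M k (\<lambda>T e. wD T e + un T e) uB"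
    and vI: "vI \<in> FluxUI M k" "\<forall>q\<in>QI M k. bf M vI q = bf M uB q"
    and u: "u = (\<lambda>T e. uI T e + uB T e - vI T e)"
    using step unfolding level_step_def by blast
  have un: "flux_balanced M k un" "\<forall>q\<in>Q0 M k. bf M un q = 0" using C[OF coarse] by auto
  have P: "is_partition (m_dec M k)" by (rule dec_partition[OF v k(2)])
  have bI: "bf M u qq = 0" if "qq \<in> QI M k" for qq
    unfolding u bf_comb using uI(2) vI(2) that by simp
  have b0: "bf M u q0 = 0" if q0: "q0 \<in> Q0 M k" for q0
  proof -
    have c0: "\<forall>X\<in>m_dec M k. \<forall>T\<in>X. \<forall>T'\<in>X. q0 T = q0 T'" using q0 unfolding Q0_def by blast
    have "bf M uI q0 = 0" "bf M vI q0 = 0"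
      unfolding bf_piecewise_const[OF P c0] using FluxUI_outflux_zero[OF v k] uI(1) vI(1) by simp_all
    moreover have "bf M uB q0 = bf M un q0"
      unfolding bf_piecewise_const[OF P c0] using Erel_outflux[OF v k E wD un(1)] by simp
    ultimately show ?thesis unfolding u bf_comb using un(2) q0 by simp
  qed
  have "bf M u q = 0" if q: "q \<in> Qsp M k" for q
  proof -
    obtain q0 qq where "q0 \<in> Q0 M k" "qq \<in> QI M k" "q = (\<lambda>T. q0 T + qq T)"
      using Qsp_split[OF v k q] by blast
    then show ?thesis using b0 bI by (simp add: bf_add)
  qed
  moreover have "uI \<in> FluxU M k" "vI \<in> FluxU M k" using uI(1) vI(1) unfolding FluxUI_def by auto
  moreover have "uB \<in> FluxU M k" using E unfolding Erel_def by blast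
  ultimately show ?thesis unfolding U_combination_def u by blast
qed

lemma bddc_divfree:
  assumes v: "valid_setting M"
  shows "1 \<le> k \<Longrightarrow> k + n = m_L M - 1 \<Longrightarrow> bddc M n k r u p
    \<Longrightarrow> (\<forall>q\<in>Qsp M k. bf M u q = 0) \<and> U_combination M k u"
proof (induction n arbitrary: k r u p)
  case 0
  then have k: "1 \<le> k" "k \<le> m_L M - 1" by simp_all
  show ?case
  proof (rule level_step_divfree[OF v k])
    show "level_step M k r (coarse_solve M k) u p" using "0.prems"(3) by simp
  next
    fix rB un pn assume "coarse_solve M k rB un pn"
    then show "flux_balanced M k un \<and> (\<forall>q\<in>Q0 M k. bf M un q = 0)"
      unfolding coarse_solve_def using flux_balanced_WtilPi[OF v k] by blast
  qed
next
  case (Suc n)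
  then have k: "1 \<le> k" "k \<le> m_L M - 1" "Suc k \<le> m_L M - 1" by simp_all
  show ?case
  proof (rule level_step_divfree[OF v k(1,2)])
    show "level_step M k r (\<lambda>rB un pn. \<exists>rn. (\<forall>v\<in>FluxU M (Suc k). \<forall>y. Erel M k v y \<longrightarrow> rn v = rB y)
                                        \<and> bddc M n (Suc k) rn un pn) u p"
      using Suc.prems(3) by simp
  next
    fix rB un pn
    assume "\<exists>rn. (\<forall>v\<in>FluxU M (Suc k). \<forall>y. Erel M k v y \<longrightarrow> rn v = rB y) \<and> bddc M n (Suc k) rn un pn"
    then obtain rn where "bddc M n (Suc k) rn un pn" by blast
    then have "(\<forall>q\<in>Qsp M (Suc k). bf M un q = 0) \<and> U_combination M (Suc k) un"
      using Suc.IH[of "Suc k"] Suc.prems(2) by simp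
    moreover have "Qsp M (Suc k) = Q0 M k" unfolding Qsp_def using k(1) by simp
    ultimately show "flux_balanced M k un \<and> (\<forall>q\<in>Q0 M k. bf M un q = 0)"
      using U_combination_balanced[OF v k(1,3)] by simp
  qed
qed

theorem lemma3:
  fixes M :: "('e::finite, 'f::finite) bddc_setting"
    and l :: nat
    and r :: "('e,'f) flux \<Rightarrow> real"
    and u :: "('e,'f) flux"
    and p :: "'e \<Rightarrow> real"
  assumes "valid_setting M"
    and "1 \<le> l" and "l \<le> m_L M - 1"
    and "lin_functional_on (FluxU M l) r"
    and "bddc M (m_L M - 1 - l) l r u p"
  shows "\<forall>q\<in>Qsp M l. bf M u q = 0"
  using bddc_divfree[OF assms(1,2) _ assms(5)] assms(3) by simp

end
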